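(* For all positive integers $k,n$ it holds that $u(n,n+k)\ge \varepsilon(n,n+k)-2^{k-1}-1$.
   Context: All matrices are binary. For a nonempty set $S$ of columns of a binary matrix, let $z$ be the sum over the integers of the columns in $S$. $S$ is called $1$-free if no entry of $z$ equals $1$, and even if all entries of $z$ are even. For a binary $m\times n$ matrix $A$ with $m<n$: $\varepsilon(A)$ is the smallest cardinality of a nonempty even set of columns, and $u(A)$ is the smallest cardinality of a nonempty $1$-free set of columns. For $m<n$, $\varepsilon(m,n)$ and $u(m,n)$ denote the maxima of $\varepsilon(A)$, resp. $u(A)$, over all binary $m\times n$ matrices $A$. *)

theory Defs
  imports Main
begin

text \<open>A binary m x n matrix is represented as A :: nat \<Rightarrow> nat \<Rightarrow> bool,
  where A i j (for i < m, j < n) is the entry in row i, column j (True = 1).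
  Entries outside the index range are irrelevant.\<close>

definition colsum :: "(nat \<Rightarrow> nat \<Rightarrow> bool) \<Rightarrow> nat set \<Rightarrow> nat \<Rightarrow> nat" where
  "colsum A S i = (\<Sum>j\<in>S. if A i j then 1 else 0)"

definition even_set :: "nat \<Rightarrow> nat \<Rightarrow> (nat \<Rightarrow> nat \<Rightarrow> bool) \<Rightarrow> nat set \<Rightarrow> bool" where
  "even_set m n A S \<longleftrightarrow> S \<noteq> {} \<and> S \<subseteq> {..<n} \<and> (\<forall>i<m. even (colsum A S i))"

definition one_free :: "nat \<Rightarrow> nat \<Rightarrow> (nat \<Rightarrow> nat \<Rightarrow> bool) \<Rightarrow> nat set \<Rightarrow> bool" where
  "one_free m n A S \<longleftrightarrow> S \<noteq> {} \<and> S \<subseteq> {..<n} \<and> (\<forall>i<m. colsum A S i \<noteq> 1)"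

definition eps_mat :: "nat \<Rightarrow> nat \<Rightarrow> (nat \<Rightarrow> nat \<Rightarrow> bool) \<Rightarrow> nat" where
  "eps_mat m n A = (LEAST c. \<exists>S. even_set m n A S \<and> card S = c)"

definition u_mat :: "nat \<Rightarrow> nat \<Rightarrow> (nat \<Rightarrow> nat \<Rightarrow> bool) \<Rightarrow> nat" where
  "u_mat m n A = (LEAST c. \<exists>S. one_free m n A S \<and> card S = c)"

text \<open>Maxima over all binary m x n matrices (meaningful for m < n).\<close>

definition eps :: "nat \<Rightarrow> nat \<Rightarrow> nat" where
  "eps m n = Max {eps_mat m n A | A. True}"

definition u :: "nat \<Rightarrow> nat \<Rightarrow> nat" where
  "u m n = Max {u_mat m n A | A. True}"

end

theory Submission
  imports Defs
begin

text \<open>Upper bound on \<open>\<epsilon>\<close>: the even column sets of an \<open>n \<times> (n + k)\<close> matrix form its kernel over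
  GF(2), which has at least \<open>2 ^ k\<close> elements, and every column lies in at most half of them.
  Averaging the sizes of the nonempty kernel elements gives the Plotkin-type bound
  \<open>2 \<epsilon> (2 ^ k - 1) \<le> (n + k) 2 ^ k\<close>.

  Lower bound on \<open>u\<close>: take as rows the pairs \<open>{j, j + 2 ^ k - 1}\<close> and the triples
  \<open>{2 ^ l, w, 2 ^ l + w} - 1\<close> (\<open>w < 2 ^ l\<close>, \<open>l < k\<close>); there are at most \<open>n\<close> of them.  A 1-free set
  is then \<open>(2 ^ k - 1)\<close>-periodic, and its residues meet every triple in \<open>0, 2\<close> or \<open>3\<close> points, which
  forces at least \<open>2 ^ (k - 1)\<close> residues.  Hence \<open>2 u \<ge> 2 ^ k \<lfloor>(n + k) / (2 ^ k - 1)\<rfloor>\<close>, and comparing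
  the two bounds yields \<open>\<epsilon> < u + 2 ^ (k - 1)\<close>.\<close>

lemma colsum_eq_card: "finite S \<Longrightarrow> colsum A S i = card {j\<in>S. A i j}"
  unfolding colsum_def by (simp add: sum.If_cases Int_def conj_commute)

lemma colsum_sym_diff:
  assumes "finite S" "finite T"
  shows "colsum A S i + colsum A T i = colsum A (sym_diff S T) i + 2 * colsum A (S \<inter> T) i"
proof -
  have "sym_diff S T \<union> (S \<inter> T) = S \<union> T" by blast
  moreover have "sym_diff S T \<inter> (S \<inter> T) = {}" by blast
  ultimately have "colsum A (S \<union> T) i = colsum A (sym_diff S T) i + colsum A (S \<inter> T) i"
    unfolding colsum_def using assms by (metis (no_types, lifting) finite_Int finite_Un sum.union_disjoint)
  moreover have "colsum A (S \<union> T) i + colsum A (S \<inter> T) i = colsum A S i + colsum A T i"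
    unfolding colsum_def by (rule sum.union_inter[OF assms])
  ultimately show ?thesis by simp
qed

text \<open>The kernel of \<open>A\<close> over GF(2), with column sets as vectors; unlike \<^const>\<open>even_set\<close> it
  contains \<open>{}\<close>.\<close>

definition even_col_sets :: "nat \<Rightarrow> nat \<Rightarrow> (nat \<Rightarrow> nat \<Rightarrow> bool) \<Rightarrow> nat set set" where
  "even_col_sets m N A = {S. S \<subseteq> {..<N} \<and> (\<forall>i<m. even (colsum A S i))}"

lemma even_set_iff: "even_set m N A S \<longleftrightarrow> S \<in> even_col_sets m N A \<and> S \<noteq> {}"
  unfolding even_set_def even_col_sets_def by blast

lemma finite_even_col_sets: "finite (even_col_sets m N A)"
  by (rule finite_subset[of _ "Pow {..<N}"]) (auto simp: even_col_sets_def)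

lemma empty_in_even_col_sets: "{} \<in> even_col_sets m N A"
  by (simp add: even_col_sets_def colsum_def)

lemma sym_diff_in_even_col_sets_iff:
  assumes "S \<subseteq> {..<N}" "T \<subseteq> {..<N}"
  shows "sym_diff S T \<in> even_col_sets m N A \<longleftrightarrow>
    (\<forall>i<m. even (colsum A S i) \<longleftrightarrow> even (colsum A T i))"
proof -
  have "finite S" "finite T" using assms finite_subset by blast+
  then have "even (colsum A (sym_diff S T) i) \<longleftrightarrow> (even (colsum A S i) \<longleftrightarrow> even (colsum A T i))" for i
    using colsum_sym_diff[of S T A i] by presburger
  with assms show ?thesis unfolding even_col_sets_def by auto
qed

lemma sym_diff_in_even_col_sets:
  "S \<in> even_col_sets m N A \<Longrightarrow> T \<in> even_col_sets m N A \<Longrightarrow> sym_diff S T \<in> even_col_sets m N A"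
  by (subst sym_diff_in_even_col_sets_iff) (auto simp: even_col_sets_def)

lemma inj_on_sym_diff: "inj_on (\<lambda>S. sym_diff S T) X"
  by (rule inj_onI) blast

text \<open>Column sets with the same pattern of odd rows differ by a kernel element, so each of the
  \<open>2 ^ m\<close> patterns is shared by at most as many sets as the kernel has.\<close>

lemma card_even_col_sets: "2 ^ N \<le> 2 ^ m * card (even_col_sets m N A)"
proof -
  define odd_rows where "odd_rows S = {i. i < m \<and> odd (colsum A S i)}" for S
  define F where "F p = {S \<in> Pow {..<N}. odd_rows S = p}" for p
  have card_F: "card (F p) \<le> card (even_col_sets m N A)" for p
  proof (cases "F p = {}")
    case False
    then obtain T where T: "T \<in> F p" by auto
    have "(\<lambda>S. sym_diff S T) ` F p \<subseteq> even_col_sets m N A"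
    proof
      fix X assume "X \<in> (\<lambda>S. sym_diff S T) ` F p"
      then obtain S where S: "S \<in> F p" "X = sym_diff S T" by auto
      then have "odd_rows S = odd_rows T" using T unfolding F_def by simp
      then have "\<forall>i<m. even (colsum A S i) \<longleftrightarrow> even (colsum A T i)"
        unfolding odd_rows_def set_eq_iff by auto
      with S T show "X \<in> even_col_sets m N A"
        unfolding F_def by (simp add: sym_diff_in_even_col_sets_iff)
    qed
    then show ?thesis by (rule card_inj_on_le[OF inj_on_sym_diff _ finite_even_col_sets])
  qed simp
  have "Pow {..<N} \<subseteq> (\<Union>p\<in>Pow {..<m}. F p)"
  proof
    fix S assume "S \<in> Pow {..<N}"
    then have "S \<in> F (odd_rows S)" "odd_rows S \<in> Pow {..<m}"
      by (auto simp: F_def odd_rows_def)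
    then show "S \<in> (\<Union>p\<in>Pow {..<m}. F p)" by blast
  qed
  then have "card (Pow {..<N}) \<le> card (\<Union>p\<in>Pow {..<m}. F p)"
    by (rule card_mono[rotated]) (auto simp: F_def)
  also have "\<dots> \<le> (\<Sum>p\<in>Pow {..<m}. card (F p))"
    by (rule card_UN_le) simp
  also have "\<dots> \<le> (\<Sum>p\<in>Pow {..<m}. card (even_col_sets m N A))"
    by (intro sum_mono card_F)
  finally show ?thesis by (simp add: card_Pow mult.commute)
qed

lemma card_even_col_sets_ge:
  assumes "m \<le> N"
  shows "2 ^ (N - m) \<le> card (even_col_sets m N A)"
proof -
  have "2 ^ m * 2 ^ (N - m) = (2::nat) ^ N" using assms by (simp flip: power_add)
  with card_even_col_sets[of N m A]
  have "2 ^ m * 2 ^ (N - m) \<le> 2 ^ m * card (even_col_sets m N A)" by simp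
  then show ?thesis by simp
qed

lemma even_set_exists:
  assumes "m < N"
  obtains S where "even_set m N A S"
proof -
  have "(2::nat) \<le> 2 ^ (N - m)"
    using power_increasing[of 1 "N - m" "2::nat"] assms by simp
  then have "2 \<le> card (even_col_sets m N A)"
    using card_even_col_sets_ge[of m N A] assms by linarith
  then have "\<not> even_col_sets m N A \<subseteq> {{}}"
    using card_mono[of "{{}}" "even_col_sets m N A"] by auto
  then show ?thesis using that by (auto simp: even_set_iff)
qed

lemma eps_mat_attained:
  assumes "m < N"
  obtains S where "even_set m N A S" "card S = eps_mat m N A"
proof -
  obtain S where "even_set m N A S" using even_set_exists[OF assms] .
  then have "\<exists>c S. even_set m N A S \<and> card S = c" by blast
  from LeastI_ex[OF this] show ?thesis using that unfolding eps_mat_def by blast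
qed

lemma eps_mat_le_card: "even_set m N A S \<Longrightarrow> eps_mat m N A \<le> card S"
  unfolding eps_mat_def by (rule Least_le) blast

lemma even_set_imp_one_free: "even_set m N A S \<Longrightarrow> one_free m N A S"
  unfolding even_set_def one_free_def by (metis odd_one)

lemma u_mat_attained:
  assumes "m < N"
  obtains S where "one_free m N A S" "card S = u_mat m N A"
proof -
  obtain S where "even_set m N A S" using even_set_exists[OF assms] .
  then have "\<exists>c S. one_free m N A S \<and> card S = c" by (blast dest: even_set_imp_one_free)
  from LeastI_ex[OF this] show ?thesis using that unfolding u_mat_def by blast
qed

lemma card_even_col_sets_containing:
  "2 * card {S \<in> even_col_sets m N A. j \<in> S} \<le> card (even_col_sets m N A)"
proof (cases "\<exists>T \<in> even_col_sets m N A. j \<in> T")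
  case True
  let ?K = "even_col_sets m N A"
  obtain T where T: "T \<in> ?K" "j \<in> T" using True by blast
  have "(\<lambda>S. sym_diff S T) ` {S \<in> ?K. j \<in> S} \<subseteq> {S \<in> ?K. j \<notin> S}"
    using T sym_diff_in_even_col_sets by blast
  then have "card {S \<in> ?K. j \<in> S} \<le> card {S \<in> ?K. j \<notin> S}"
    by (rule card_inj_on_le[OF inj_on_sym_diff]) (simp add: finite_even_col_sets)
  moreover have "card ?K = card {S \<in> ?K. j \<in> S} + card {S \<in> ?K. j \<notin> S}"
    using card_Int_Diff[OF finite_even_col_sets, where B="{S. j \<in> S}"] by (simp add: Int_def set_diff_eq)
  ultimately show ?thesis by linarith
next
  case False
  then have "{S \<in> even_col_sets m N A. j \<in> S} = {}" by blast
  then show ?thesis by (metis card.empty le0 mult_0_right)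
qed

lemma sum_card_even_col_sets:
  "(\<Sum>S \<in> even_col_sets m N A. card S) = (\<Sum>j<N. card {S \<in> even_col_sets m N A. j \<in> S})"
proof -
  let ?K = "even_col_sets m N A"
  have "(\<Sum>S\<in>?K. card S) = (\<Sum>S\<in>?K. \<Sum>j<N. of_bool (j \<in> S))"
    by (intro sum.cong refl) (auto simp: even_col_sets_def Int_absorb1 simp flip: sum.inter_restrict)
  also have "\<dots> = (\<Sum>j<N. \<Sum>S\<in>?K. of_bool (j \<in> S))" by (rule sum.swap)
  also have "\<dots> = (\<Sum>j<N. card {S \<in> ?K. j \<in> S})"
    by (simp add: finite_even_col_sets Int_def flip: sum.inter_filter)
  finally show ?thesis .
qed

text \<open>Monotonicity of \<open>(c - 1) / c\<close> in \<open>c\<close>, kept in \<open>nat\<close>.\<close>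

lemma pred_ratio_mono:
  fixes a b c P :: nat
  assumes "a * (c - 1) \<le> b * c" "0 < P" "P \<le> c"
  shows "a * (P - 1) \<le> b * P"
proof -
  have "(P - 1) * c = P * c - c" "(c - 1) * P = P * c - P"
    by (simp_all only: diff_mult_distrib mult_1 mult.commute[of c P])
  then have "(P - 1) * c \<le> (c - 1) * P" using assms(3) by linarith
  then have "a * (P - 1) * c \<le> a * (c - 1) * P"
    by (metis mult.assoc mult_le_mono2)
  also have "\<dots> \<le> b * c * P" using assms(1) by simp
  finally have "a * (P - 1) * c \<le> b * P * c" by (simp add: mult_ac)
  then show ?thesis using assms(2,3) by simp
qed

lemma eps_mat_plotkin:
  assumes "m < N"
  shows "2 * eps_mat m N A * (2 ^ (N - m) - 1) \<le> N * 2 ^ (N - m)"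
proof -
  let ?K = "even_col_sets m N A"
  define d where "d = eps_mat m N A"
  have "(card ?K - 1) * d = (\<Sum>S \<in> ?K - {{}}. d)"
    by (simp add: finite_even_col_sets empty_in_even_col_sets card_Diff_singleton)
  also have "\<dots> \<le> (\<Sum>S \<in> ?K - {{}}. card S)"
    by (intro sum_mono) (simp add: d_def eps_mat_le_card even_set_iff)
  also have "\<dots> = (\<Sum>S \<in> ?K. card S)"
    by (intro sum.mono_neutral_left) (auto simp: finite_even_col_sets)
  also have "\<dots> = (\<Sum>j<N. card {S \<in> ?K. j \<in> S})"
    by (rule sum_card_even_col_sets)
  finally have "(card ?K - 1) * d \<le> (\<Sum>j<N. card {S \<in> ?K. j \<in> S})" .
  then have "2 * d * (card ?K - 1) \<le> (\<Sum>j<N. 2 * card {S \<in> ?K. j \<in> S})"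
    by (simp add: mult.commute mult.left_commute flip: sum_distrib_left)
  also have "\<dots> \<le> (\<Sum>j<N. card ?K)"
    by (intro sum_mono card_even_col_sets_containing)
  also have "\<dots> = N * card ?K" by simp
  finally show ?thesis unfolding d_def
    by (rule pred_ratio_mono) (use card_even_col_sets_ge[of m N A] assms in \<open>simp_all add: mult.commute\<close>)
qed

lemma eps_mat_upper_bound:
  assumes "m < N"
  shows "2 * eps_mat m N A < 2 ^ (N - m) * (N div (2 ^ (N - m) - 1) + 1)"
proof -
  define M :: nat where "M = 2 ^ (N - m) - 1"
  have "(2::nat) \<le> 2 ^ (N - m)" using power_increasing[of 1 "N - m" "2::nat"] assms by simp
  then have P: "2 ^ (N - m) = M + 1" and "0 < M" unfolding M_def by simp_all
  have "2 * eps_mat m N A * M \<le> N * (M + 1)"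
    using eps_mat_plotkin[OF assms, of A] unfolding P by simp
  also have "\<dots> < (M + 1) * (N div M + 1) * M"
  proof -
    have "N = N div M * M + N mod M" by simp
    also have "\<dots> < (N div M + 1) * M"
      using mod_less_divisor[OF \<open>0 < M\<close>, of N]
      by (simp only: distrib_right mult_1_left nat_add_left_cancel_less)
    finally have "N < (N div M + 1) * M" .
    then have "N * (M + 1) < ((N div M + 1) * M) * (M + 1)"
      by (rule mult_strict_right_mono) simp
    then show ?thesis by (simp only: mult_ac)
  qed
  finally show ?thesis unfolding P by (simp only: mult_less_cancel2 add_diff_cancel_right')
qed

definition triple_one_free :: "nat \<Rightarrow> nat set \<Rightarrow> bool" where
  "triple_one_free k V \<longleftrightarrow> (\<forall>l<k. \<forall>w \<in> {1..<2 ^ l}. card (V \<inter> {2 ^ l, w, 2 ^ l + w}) \<noteq> 1)"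

lemma card_Int_three:
  assumes "a \<noteq> b" "a \<noteq> c" "b \<noteq> c"
  shows "card (V \<inter> {a, b, c}) = of_bool (a \<in> V) + of_bool (b \<in> V) + of_bool (c \<in> V)"
  using assms by (cases "a \<in> V"; cases "b \<in> V"; cases "c \<in> V") auto

lemma triple_one_free_Suc:
  "triple_one_free (Suc k) V \<longleftrightarrow>
    triple_one_free k V \<and> (\<forall>w \<in> {1..<2 ^ k}. card (V \<inter> {2 ^ k, w, 2 ^ k + w}) \<noteq> 1)"
  unfolding triple_one_free_def less_Suc_eq by blast

lemma triple_one_free_restrict:
  assumes "triple_one_free k V"
  shows "triple_one_free k (V \<inter> {..<2 ^ k})"
  unfolding triple_one_free_def
proof (intro allI impI ballI)
  fix l w assume "l < k" "w \<in> {1..<(2::nat) ^ l}"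
  then have "2 ^ l + w < (2::nat) ^ k"
    using power_increasing[of "Suc l" k "2::nat"] by simp
  then have "V \<inter> {..<2 ^ k} \<inter> {2 ^ l, w, 2 ^ l + w} = V \<inter> {2 ^ l, w, 2 ^ l + w}"
    using \<open>l < k\<close> by auto
  with assms \<open>l < k\<close> \<open>w \<in> {1..<2 ^ l}\<close> show "card (V \<inter> {..<2 ^ k} \<inter> {2 ^ l, w, 2 ^ l + w}) \<noteq> 1"
    unfolding triple_one_free_def by simp
qed

text \<open>Split at the top element \<open>h = 2 ^ k\<close>: if \<open>h \<in> V\<close>, every \<open>w < h\<close> has \<open>w\<close> or \<open>h + w\<close> in \<open>V\<close>;
  otherwise \<open>V\<close> consists of two translated copies of its lower half.\<close>

lemma card_ge_if_triple_one_free: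
  assumes "V \<subseteq> {1..<2 ^ k}" "V \<noteq> {}" "triple_one_free k V"
  shows "2 ^ k \<le> 2 * card V"
  using assms
proof (induction k arbitrary: V)
  case (Suc k)
  define h :: nat where "h = 2 ^ k"
  have V: "V \<subseteq> {1..<2 * h}" using Suc.prems(1) by (simp add: h_def)
  then have "finite V" using finite_subset by blast
  have top: "h \<in> V \<Longrightarrow> w \<notin> V \<Longrightarrow> h + w \<in> V" "h \<notin> V \<Longrightarrow> w \<in> V \<longleftrightarrow> h + w \<in> V"
    if "w \<in> {1..<h}" for w
  proof -
    have "card (V \<inter> {h, w, h + w}) \<noteq> 1"
      using Suc.prems(3) that by (simp add: triple_one_free_Suc h_def)
    then show "h \<in> V \<Longrightarrow> w \<notin> V \<Longrightarrow> h + w \<in> V" "h \<notin> V \<Longrightarrow> w \<in> V \<longleftrightarrow> h + w \<in> V"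
      using card_Int_three[of h w "h + w" V] that by (cases "w \<in> V"; cases "h + w \<in> V"; auto)+
  qed
  show ?case
  proof (cases "h \<in> V")
    case True
    define f where "f w = (if w \<in> V then w else h + w)" for w
    have "inj_on f {1..<h}" by (rule inj_onI) (auto simp: f_def split: if_splits)
    moreover have "h \<notin> f ` {1..<h}" by (auto simp: f_def)
    ultimately have "card (insert h (f ` {1..<h})) = h"
      using card_image by (fastforce simp: h_def)
    moreover have "insert h (f ` {1..<h}) \<subseteq> V"
      using True top by (auto simp: f_def)
    ultimately have "h \<le> card V" using card_mono[OF \<open>finite V\<close>] by metis
    then show ?thesis by (simp add: h_def)
  next
    case False
    define L where "L = V \<inter> {..<h}"
    have shift: "w \<in> V \<longleftrightarrow> h + w \<in> V" if "w \<in> {1..<h}" for w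
      using top(2)[OF that False] .
    have "L \<subseteq> {1..<2 ^ k}" using V by (auto simp: L_def h_def)
    moreover have "L \<noteq> {}"
    proof
      assume "L = {}"
      obtain x where "x \<in> V" using Suc.prems(2) by auto
      with \<open>L = {}\<close> have "h \<le> x" by (auto simp: L_def)
      moreover have "x \<noteq> h" "x < 2 * h" using \<open>x \<in> V\<close> False V by auto
      ultimately have "x - h \<in> {1..<h}" "h + (x - h) \<in> V" using \<open>x \<in> V\<close> by auto
      with shift \<open>L = {}\<close> show False by (auto simp: L_def)
    qed
    moreover have "triple_one_free k L"
      using Suc.prems(3) triple_one_free_restrict by (simp add: triple_one_free_Suc L_def h_def)
    ultimately have "2 ^ k \<le> 2 * card L" by (rule Suc.IH)
    moreover have "card L + card ((+) h ` L) \<le> card V"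
    proof -
      have "L \<union> (+) h ` L \<subseteq> V" "L \<inter> (+) h ` L = {}"
        using shift V by (auto simp: L_def)
      then show ?thesis using card_mono[OF \<open>finite V\<close>]
        by (metis L_def \<open>finite V\<close> card_Un_disjoint finite_Int finite_imageI)
    qed
    ultimately show ?thesis by (simp add: card_image h_def)
  qed
qed simp

lemma mem_iff_mod_mem:
  fixes M N j :: nat
  assumes "0 < M" and period: "\<And>j. j + M < N \<Longrightarrow> j \<in> S \<longleftrightarrow> j + M \<in> S" and "j < N"
  shows "j \<in> S \<longleftrightarrow> j mod M \<in> S"
  using \<open>j < N\<close>
proof (induction j rule: less_induct)
  case (less j)
  show ?case
  proof (cases "j < M")
    case False
    then have "j - M \<in> S \<longleftrightarrow> j \<in> S" using period[of "j - M"] less.prems by simp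
    moreover have "j - M \<in> S \<longleftrightarrow> (j - M) mod M \<in> S" using less False assms(1) by simp
    ultimately show ?thesis using False by (simp add: le_mod_geq)
  qed simp
qed

lemma card_periodic_ge:
  fixes M N :: nat
  assumes "0 < M" "finite S" and periodic: "\<And>j. j < N \<Longrightarrow> j \<in> S \<longleftrightarrow> j mod M \<in> S"
  shows "card (S \<inter> {..<M}) * (N div M) \<le> card S"
proof -
  define g where "g = (\<lambda>(v, i). v + i * M)"
  have "inj_on g ({..<M} \<times> UNIV)"
  proof (rule inj_onI, clarify)
    fix v i v' i' assume "v < M" "v' < M" and "g (v, i) = g (v', i')"
    then have eq: "v + i * M = v' + i' * M" by (simp add: g_def)
    show "v = v' \<and> i = i'"
      using arg_cong[OF eq, of "\<lambda>x. x mod M"] arg_cong[OF eq, of "\<lambda>x. x div M"] \<open>v < M\<close> \<open>v' < M\<close>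
      by simp
  qed
  then have "inj_on g ((S \<inter> {..<M}) \<times> {..<N div M})" by (rule inj_on_subset) auto
  moreover have "g ` ((S \<inter> {..<M}) \<times> {..<N div M}) \<subseteq> S"
  proof clarify
    fix v i assume "v \<in> S" "v < M" "i < N div M"
    have "v + i * M < Suc i * M" using \<open>v < M\<close> by simp
    also have "\<dots> \<le> N div M * M" using \<open>i < N div M\<close> by (intro mult_le_mono1) simp
    also have "\<dots> \<le> N" by (rule div_times_less_eq_dividend)
    finally have "v + i * M < N" .
    with \<open>v \<in> S\<close> \<open>v < M\<close> show "g (v, i) \<in> S" using periodic[of "v + i * M"] by (simp add: g_def)
  qed
  ultimately have "card ((S \<inter> {..<M}) \<times> {..<N div M}) \<le> card S"
    using card_inj_on_le \<open>finite S\<close> by blast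
  then show ?thesis by (simp add: card_cartesian_product)
qed

lemma sum_pow2_minus_one: "(\<Sum>l<k. (2::nat) ^ l - 1) + k + 1 = 2 ^ k"
proof (induction k)
  case (Suc k)
  have "(1::nat) \<le> 2 ^ k" by simp
  with Suc show ?case by simp
qed simp

text \<open>The rows of the matrix realising the lower bound on \<open>u\<close>: a 1-free set meeting every pair
  row is \<open>(2 ^ k - 1)\<close>-periodic, and the triple rows are the conditions of \<open>triple_one_free\<close>
  shifted to 0-based column indices.\<close>

definition pair_triple_rows :: "nat \<Rightarrow> nat \<Rightarrow> nat set set" where
  "pair_triple_rows k N =
     (\<lambda>j. {j, j + (2 ^ k - 1)}) ` {..<N - (2 ^ k - 1)} \<union>
     (\<lambda>(l, w). {2 ^ l - 1, w - 1, 2 ^ l + w - 1}) ` (SIGMA l:{..<k}. {1..<2 ^ l})"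

lemma finite_pair_triple_rows: "finite (pair_triple_rows k N)"
  unfolding pair_triple_rows_def by auto

lemma card_pair_triple_rows:
  assumes "2 ^ k - 1 \<le> N"
  shows "card (pair_triple_rows k N) \<le> N - k"
proof -
  have "card (pair_triple_rows k N) \<le> card {..<N - (2 ^ k - 1)} + card (SIGMA l:{..<k}. {1..<(2::nat) ^ l})"
    unfolding pair_triple_rows_def by (intro card_Un_le[THEN order_trans] add_mono card_image_le) auto
  also have "\<dots> = N - (2 ^ k - 1) + (\<Sum>l<k. 2 ^ l - 1)" by (simp add: card_SigmaI)
  finally show ?thesis using sum_pow2_minus_one[of k] assms by linarith
qed

lemma card_ge_if_pair_triple_rows_one_free:
  assumes "1 \<le> k" "S \<subseteq> {..<N}" "S \<noteq> {}"
    and one_free: "\<And>r. r \<in> pair_triple_rows k N \<Longrightarrow> card (S \<inter> r) \<noteq> 1"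
  shows "2 ^ k * (N div (2 ^ k - 1)) \<le> 2 * card S"
proof -
  define M :: nat where "M = 2 ^ k - 1"
  have "0 < M" using power_increasing[of 1 k "2::nat"] assms(1) by (simp add: M_def)
  have "j \<in> S \<longleftrightarrow> j + M \<in> S" if "j + M < N" for j
  proof -
    have "{j, j + M} \<in> pair_triple_rows k N" using that by (auto simp: pair_triple_rows_def M_def)
    with one_free \<open>0 < M\<close> show ?thesis by (cases "j \<in> S"; cases "j + M \<in> S") fastforce+
  qed
  then have periodic: "j \<in> S \<longleftrightarrow> j mod M \<in> S" if "j < N" for j
    using mem_iff_mod_mem[OF \<open>0 < M\<close> _ that] by blast
  define V where "V = Suc ` (S \<inter> {..<M})"
  have "V \<subseteq> {1..<2 ^ k}" by (auto simp: V_def M_def)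
  moreover have "V \<noteq> {}"
  proof -
    obtain x where "x \<in> S" using assms(3) by auto
    then have "x mod M \<in> S \<inter> {..<M}" using periodic[of x] assms(2) \<open>0 < M\<close> by auto
    then show ?thesis by (auto simp: V_def)
  qed
  moreover have "triple_one_free k V"
    unfolding triple_one_free_def
  proof (intro allI impI ballI)
    fix l w assume "l < k" "w \<in> {1..<(2::nat) ^ l}"
    then have "2 ^ l + w < (2::nat) ^ k"
      using power_increasing[of "Suc l" k "2::nat"] by simp
    then have "V \<inter> {2 ^ l, w, 2 ^ l + w} = Suc ` (S \<inter> {2 ^ l - 1, w - 1, 2 ^ l + w - 1})"
      using \<open>w \<in> {1..<2 ^ l}\<close> by (auto simp: V_def M_def image_iff)
    moreover have "{2 ^ l - 1, w - 1, 2 ^ l + w - 1} \<in> pair_triple_rows k N"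
      using \<open>l < k\<close> \<open>w \<in> {1..<2 ^ l}\<close> unfolding pair_triple_rows_def by blast
    ultimately show "card (V \<inter> {2 ^ l, w, 2 ^ l + w}) \<noteq> 1"
      using one_free by (simp add: card_image)
  qed
  ultimately have "2 ^ k \<le> 2 * card V" by (rule card_ge_if_triple_one_free)
  then have "2 ^ k \<le> 2 * card (S \<inter> {..<M})" by (simp add: V_def card_image)
  then have "2 ^ k * (N div M) \<le> 2 * (card (S \<inter> {..<M}) * (N div M))" by simp
  also have "\<dots> \<le> 2 * card S"
    using card_periodic_ge[OF \<open>0 < M\<close> _ periodic] finite_subset[OF assms(2)] by simp
  finally show ?thesis by (simp add: M_def)
qed

lemma finite_range_bounded_nat: "(\<And>x. f x \<le> (b::nat)) \<Longrightarrow> finite {f x | x. True}"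
  by (rule finite_subset[of _ "{..b}"]) auto

lemma u_mat_le_u:
  assumes "m < N"
  shows "u_mat m N A \<le> u m N"
proof -
  have "u_mat m N B \<le> N" for B
  proof -
    obtain S where "one_free m N B S" "card S = u_mat m N B" using u_mat_attained[OF assms] .
    then show ?thesis using card_mono[of "{..<N}" S] by (auto simp: one_free_def)
  qed
  then have "finite {u_mat m N B | B. True}" by (rule finite_range_bounded_nat)
  then show ?thesis unfolding u_def by (rule Max_ge) blast
qed

lemma eps_attained:
  assumes "m < N"
  obtains A where "eps m N = eps_mat m N A"
proof -
  have "eps_mat m N B \<le> N" for B
  proof -
    obtain S where "even_set m N B S" "card S = eps_mat m N B" using eps_mat_attained[OF assms] .
    then show ?thesis using card_mono[of "{..<N}" S] by (auto simp: even_set_def)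
  qed
  then have "finite {eps_mat m N B | B. True}" by (rule finite_range_bounded_nat)
  then have "eps m N \<in> {eps_mat m N B | B. True}" unfolding eps_def by (rule Max_in) blast
  with that show ?thesis by blast
qed

lemma u_lower_bound:
  assumes "1 \<le> k"
  shows "2 ^ k * ((n + k) div (2 ^ k - 1)) \<le> 2 * u n (n + k)"
proof (cases "2 ^ k - 1 \<le> n + k")
  case True
  define N where "N = n + k"
  define R where "R = pair_triple_rows k N"
  obtain f where f: "bij_betw f {0..<card R} R"
    using ex_bij_betw_nat_finite[OF finite_pair_triple_rows] unfolding R_def by blast
  have "card R \<le> n" using card_pair_triple_rows[of k N] True by (simp add: R_def N_def)
  have "n < N" using assms by (simp add: N_def)
  then obtain S where S: "one_free n N (\<lambda>i j. j \<in> f i) S" "card S = u_mat n N (\<lambda>i j. j \<in> f i)"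
    using u_mat_attained by blast
  have "finite S" using S(1) finite_subset by (auto simp: one_free_def)
  have "card (S \<inter> r) \<noteq> 1" if "r \<in> R" for r
  proof -
    have "r \<in> f ` {0..<card R}" using f \<open>r \<in> R\<close> by (simp add: bij_betw_def)
    then obtain i where "i < card R" "f i = r" by auto
    then have "colsum (\<lambda>i j. j \<in> f i) S i \<noteq> 1"
      using S(1) \<open>card R \<le> n\<close> by (simp add: one_free_def)
    then show ?thesis using colsum_eq_card[OF \<open>finite S\<close>] \<open>f i = r\<close> by (simp add: Int_def)
  qed
  then have "2 ^ k * (N div (2 ^ k - 1)) \<le> 2 * card S"
    using card_ge_if_pair_triple_rows_one_free[OF assms] S(1) by (simp add: one_free_def R_def)
  also have "card S \<le> u n N" using S(2) u_mat_le_u[OF \<open>n < N\<close>] by simp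
  finally show ?thesis by (simp add: N_def)
qed simp

theorem corollary6p2:
  fixes k n :: nat
  assumes "k \<ge> 1" and "n \<ge> 1"
  shows "int (u n (n + k)) \<ge> int (eps n (n + k)) - 2 ^ (k - 1) - 1"
proof -
  have "n < n + k" using assms(1) by simp
  then obtain A where A: "eps n (n + k) = eps_mat n (n + k) A" by (rule eps_attained)
  have "2 * eps n (n + k) < 2 ^ k * ((n + k) div (2 ^ k - 1) + 1)"
    using eps_mat_upper_bound[OF \<open>n < n + k\<close>, of A] by (simp add: A)
  also have "\<dots> \<le> 2 * u n (n + k) + 2 ^ k"
    using u_lower_bound[OF assms(1), of n] by (simp add: distrib_left)
  also have "\<dots> = 2 * (u n (n + k) + 2 ^ (k - 1))"
    using assms(1) by (simp add: power_eq_if)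
  finally have "eps n (n + k) \<le> u n (n + k) + 2 ^ (k - 1)" by simp
  moreover have "int (2 ^ (k - 1)) = 2 ^ (k - 1)" by simp
  ultimately show ?thesis by linarith
qed

end
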